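(* For every finite simple graph $G$ with at least one edge, there exists a non-isolated vertex $v$ of $G$ such that $\alpha(G)=\alpha(G-v)\ge \alpha(G-N[v])+1$.
   Context: $\alpha(H)$ denotes the independence number of a graph $H$ (maximum size of an independent set). For $S\subseteq V(G)$, $G-S$ is the graph obtained by deleting the vertices of $S$ and their incident edges; $G-v=G-\{v\}$; $N[v]$ is the closed neighbourhood of $v$ (i.e. $v$ together with its neighbours). *)

theory Defs
  imports Main
begin

definition simple_graph :: "'a set \<Rightarrow> ('a \<Rightarrow> 'a \<Rightarrow> bool) \<Rightarrow> bool" where
  "simple_graph V E \<longleftrightarrow> finite V \<and> (\<forall>u v. E u v \<longrightarrow> u \<in> V \<and> v \<in> V)
     \<and> (\<forall>u v. E u v \<longrightarrow> E v u) \<and> (\<forall>v. \<not> E v v)"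

definition indep_set :: "('a \<Rightarrow> 'a \<Rightarrow> bool) \<Rightarrow> 'a set \<Rightarrow> bool" where
  "indep_set E S \<longleftrightarrow> (\<forall>u\<in>S. \<forall>v\<in>S. \<not> E u v)"

text \<open>Independence number of the induced subgraph of (V,E) on vertex set W
(deleting vertices = taking the induced subgraph on the remaining ones).\<close>
definition alpha :: "'a set \<Rightarrow> ('a \<Rightarrow> 'a \<Rightarrow> bool) \<Rightarrow> nat" where
  "alpha W E = Max {card S | S. S \<subseteq> W \<and> indep_set E S}"

definition closed_nbhd :: "('a \<Rightarrow> 'a \<Rightarrow> bool) \<Rightarrow> 'a \<Rightarrow> 'a set" where
  "closed_nbhd E v = insert v {u. E v u}"

end

theory Submission
  imports Defs
begin

text \<open>Fix a maximum independent set \<open>S\<close>. Some edge has an endpoint \<open>v\<close> outside \<open>S\<close>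
  (both endpoints cannot lie in \<open>S\<close>). Deleting \<open>v\<close> keeps \<open>S\<close>, so \<open>\<alpha>(G - v) = \<alpha>(G)\<close>; and
  every independent set of \<open>G - N[v]\<close> stays independent after adding \<open>v\<close>, so
  \<open>\<alpha>(G - N[v]) + 1 \<le> \<alpha>(G) = \<alpha>(G - v)\<close>.\<close>

lemma finite_card_indep_sets:
  assumes "finite W"
  shows "finite {card S | S. S \<subseteq> W \<and> indep_set E S}"
proof -
  have "{card S | S. S \<subseteq> W \<and> indep_set E S} \<subseteq> card ` Pow W" by auto
  then show ?thesis using assms finite_subset by blast
qed

lemma card_le_alpha:
  assumes "finite W" "S \<subseteq> W" "indep_set E S"
  shows "card S \<le> alpha W E"
  unfolding alpha_def using assms finite_card_indep_sets[OF assms(1)] by (intro Max_ge) auto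

lemma maximum_indep_set_exists:
  assumes "finite W"
  obtains S where "S \<subseteq> W" "indep_set E S" "card S = alpha W E"
proof -
  have "{} \<subseteq> W \<and> indep_set E {}" by (simp add: indep_set_def)
  then have "{card S | S. S \<subseteq> W \<and> indep_set E S} \<noteq> {}" by blast
  then have "alpha W E \<in> {card S | S. S \<subseteq> W \<and> indep_set E S}"
    unfolding alpha_def by (rule Max_in[OF finite_card_indep_sets[OF assms]])
  then obtain S where "S \<subseteq> W" "indep_set E S" "alpha W E = card S" by blast
  then show ?thesis using that by simp
qed

lemma alpha_mono:
  assumes "finite W'" "W \<subseteq> W'"
  shows "alpha W E \<le> alpha W' E"
proof -
  obtain S where S: "S \<subseteq> W" "indep_set E S" "card S = alpha W E"
    using maximum_indep_set_exists[OF finite_subset[OF assms(2,1)]] .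
  have "S \<subseteq> W'" using S(1) assms(2) by (rule order_trans)
  then show ?thesis using card_le_alpha[OF assms(1) _ S(2)] S(3) by simp
qed

lemma alpha_remove_vertex_outside_maximum:
  assumes "finite W" "S \<subseteq> W" "indep_set E S" "card S = alpha W E" "v \<notin> S"
  shows "alpha (W - {v}) E = alpha W E"
proof (rule antisym)
  show "alpha (W - {v}) E \<le> alpha W E"
    by (rule alpha_mono[OF assms(1) Diff_subset])
  show "alpha W E \<le> alpha (W - {v}) E"
    using card_le_alpha[of "W - {v}" S E] assms by auto
qed

lemma alpha_remove_closed_nbhd:
  assumes "finite W" "v \<in> W"
    and sym: "\<And>u w. E u w \<Longrightarrow> E w u" and irrefl: "\<And>u. \<not> E u u"
  shows "alpha (W - closed_nbhd E v) E + 1 \<le> alpha W E"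
proof -
  obtain T where T: "T \<subseteq> W - closed_nbhd E v" "indep_set E T"
      "card T = alpha (W - closed_nbhd E v) E"
    using maximum_indep_set_exists[OF finite_Diff[OF assms(1)]] .
  have "v \<notin> T" and "finite T"
    using T(1) assms(1) finite_subset by (auto simp: closed_nbhd_def)
  then have card_insert: "card (insert v T) = card T + 1" by simp
  have "indep_set E (insert v T)"
    using T(1,2) irrefl sym unfolding indep_set_def closed_nbhd_def by blast
  moreover have "insert v T \<subseteq> W" using T(1) assms(2) by blast
  ultimately have "card (insert v T) \<le> alpha W E"
    using card_le_alpha[OF assms(1)] by blast
  then show ?thesis using card_insert T(3) by simp
qed

lemma edge_with_endpoint_outside_indep_set:
  assumes "indep_set E S" "E a b" "\<And>u w. E u w \<Longrightarrow> E w u"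
  obtains v u where "E v u" "v \<notin> S"
  using assms that unfolding indep_set_def by blast

theorem lemma1:
  fixes V :: "'a set" and E :: "'a \<Rightarrow> 'a \<Rightarrow> bool"
  assumes "simple_graph V E"
    and "\<exists>u v. E u v"
  shows "\<exists>v\<in>V. (\<exists>u. E v u) \<and> alpha V E = alpha (V - {v}) E
           \<and> alpha (V - {v}) E \<ge> alpha (V - closed_nbhd E v) E + 1"
proof -
  have fin: "finite V" and edge_in_V: "\<And>u v. E u v \<Longrightarrow> u \<in> V \<and> v \<in> V"
    and sym: "\<And>u v. E u v \<Longrightarrow> E v u" and irrefl: "\<And>v. \<not> E v v"
    using assms(1) unfolding simple_graph_def by auto
  obtain S where S: "S \<subseteq> V" "indep_set E S" "card S = alpha V E"
    using maximum_indep_set_exists[OF fin] .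
  obtain a b where "E a b" using assms(2) by blast
  then obtain v u where vu: "E v u" "v \<notin> S"
    using edge_with_endpoint_outside_indep_set[OF S(2) _ sym] by blast
  have "v \<in> V" using edge_in_V[OF vu(1)] by blast
  moreover have "alpha (V - {v}) E = alpha V E"
    using alpha_remove_vertex_outside_maximum[OF fin S vu(2)] .
  moreover have "alpha (V - closed_nbhd E v) E + 1 \<le> alpha V E"
    using alpha_remove_closed_nbhd[OF fin \<open>v \<in> V\<close> sym irrefl] .
  ultimately show ?thesis using vu(1) by auto
qed

end
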